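(* If $\mathcal D_n$ is the minimal (quotient) DFA of a left ideal, with initial state $0$ and transition semigroup $T_n$, then every transformation in $T_n$ is initially aperiodic, and no state of $\mathcal D_n$ accepts the empty language.
   Context: A left ideal is a nonempty $L\subseteq\Sigma^*$ with $L=\Sigma^*L$. The transition semigroup is the set of state transformations induced by nonempty words; $qt$ denotes the image of state $q$ under $t$. For a transformation $t$, the sequence $0,0t,0t^2,\dots$ eventually repeats: there are $i<j$ with $0,0t,\dots,0t^{j-1}$ distinct and $0t^j=0t^i$; $j-i$ is the period of $t$, and $t$ is initially aperiodic if its period is $1$. *)

theory Defs
  imports Main
begin

definition left_ideal :: "'a list set \<Rightarrow> bool" where
  "left_ideal L \<longleftrightarrow> L \<noteq> {} \<and> L = {u @ v | u v. v \<in> L}"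

definition lquot :: "'a list \<Rightarrow> 'a list set \<Rightarrow> 'a list set" where
  "lquot w K = {x. w @ x \<in> K}"

text \<open>Quotient DFA of L: the states are the quotients of L, the initial state (state 0)
  is L itself, the transition on a letter a maps K to lquot [a] K, a state K accepts
  the language K, and a word w induces the transformation K \<mapsto> lquot w K.\<close>
definition qstates :: "'a list set \<Rightarrow> 'a list set set" where
  "qstates L = {lquot w L | w. True}"

definition qinit :: "'a list set \<Rightarrow> 'a list set" where
  "qinit L = L"

definition qdelta :: "'a list set \<Rightarrow> 'a list \<Rightarrow> 'a list set" where
  "qdelta K w = lquot w K"

definition qtrans :: "'a list set \<Rightarrow> 'a list \<Rightarrow> ('a list set \<Rightarrow> 'a list set)" where
  "qtrans L w = (\<lambda>K. if K \<in> qstates L then qdelta K w else K)"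

definition trans_semigroup :: "'a list set \<Rightarrow> ('a list set \<Rightarrow> 'a list set) set" where
  "trans_semigroup L = {qtrans L w | w. w \<noteq> []}"

definition state_lang :: "'a list set \<Rightarrow> 'a list set" where
  "state_lang K = {x. [] \<in> qdelta K x}"

text \<open>Period of t w.r.t. initial state q0: j - i where 0,...,q0 t^(j-1) are distinct and
  q0 t^j = q0 t^i.  Initially aperiodic: period is 1.\<close>
definition initially_aperiodic :: "'s \<Rightarrow> ('s \<Rightarrow> 's) \<Rightarrow> bool" where
  "initially_aperiodic q0 t \<longleftrightarrow>
     (\<forall>i j. i < j \<and> inj_on (\<lambda>k. (t ^^ k) q0) {..<j} \<and> (t ^^ j) q0 = (t ^^ i) q0 \<longrightarrow> j - i = 1)"

end

theory Submission
  imports Defs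
begin

text \<open>The k-th power of the transformation of a word w sends the initial state L to its
  quotient by w^k, and for a left ideal the quotients only grow when the word is extended on the left:
  lquot v L \<subseteq> lquot (u @ v) L. So the orbit of the initial state under any transformation
  is an increasing chain of sets, and an increasing chain that returns to an earlier element
  must be stationary from that element on, which forces period 1. Every quotient of a left
  ideal contains L itself, so no state has an empty language.\<close>

lemma left_idealD: "left_ideal L \<Longrightarrow> v \<in> L \<Longrightarrow> u @ v \<in> L"
  unfolding left_ideal_def by blast

lemma lquot_append: "lquot w (lquot v L) = lquot (v @ w) L"
  unfolding lquot_def by auto

lemma lquot_mono_left_ideal:
  assumes "left_ideal L"
  shows "lquot v L \<subseteq> lquot (u @ v) L"
  unfolding lquot_def using left_idealD[OF assms, of "v @ _" u] by auto

lemma subset_lquot_left_ideal: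
  assumes "left_ideal L"
  shows "L \<subseteq> lquot u L"
  using lquot_mono_left_ideal[OF assms, of "[]" u] by (simp add: lquot_def)

lemma state_lang_eq: "state_lang K = K"
  unfolding state_lang_def qdelta_def lquot_def by simp

lemma funpow_qtrans_init:
  "(qtrans L w ^^ k) L = lquot (concat (replicate k w)) L"
proof (induction k)
  case 0
  then show ?case by (simp add: lquot_def)
next
  case (Suc k)
  have "lquot (concat (replicate k w)) L \<in> qstates L"
    unfolding qstates_def by blast
  moreover have "concat (replicate k w) @ w = concat (replicate (Suc k) w)"
    by (induction k) auto
  ultimately show ?case
    using Suc by (simp add: qtrans_def qdelta_def lquot_append del: replicate.simps)
qed

lemma initially_aperiodic_if_increasing:
  fixes t :: "'s::order \<Rightarrow> 's"
  assumes incr: "\<And>k. (t ^^ k) q \<le> (t ^^ Suc k) q"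
  shows "initially_aperiodic q t"
  unfolding initially_aperiodic_def
proof (intro allI impI)
  fix i j
  assume "i < j \<and> inj_on (\<lambda>k. (t ^^ k) q) {..<j} \<and> (t ^^ j) q = (t ^^ i) q"
  then have "i < j" and inj: "inj_on (\<lambda>k. (t ^^ k) q) {..<j}"
    and returns: "(t ^^ j) q = (t ^^ i) q" by auto
  show "j - i = 1"
  proof (rule ccontr)
    assume "j - i \<noteq> 1"
    with \<open>i < j\<close> have "Suc i < j" by simp
    have "(t ^^ Suc i) q \<le> (t ^^ j) q"
      using lift_Suc_mono_le[of "\<lambda>k. (t ^^ k) q", OF incr, of "Suc i" j] \<open>Suc i < j\<close>
      by (simp del: funpow.simps)
    with returns incr[of i] have "(t ^^ Suc i) q = (t ^^ i) q" by simp
    with inj \<open>Suc i < j\<close> show False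
      by (metis (no_types, lifting) Suc_lessD inj_onD lessThan_iff n_not_Suc_n)
  qed
qed

lemma initially_aperiodic_qtrans:
  assumes "left_ideal L"
  shows "initially_aperiodic (qinit L) (qtrans L w)"
proof (rule initially_aperiodic_if_increasing)
  fix k
  show "(qtrans L w ^^ k) (qinit L) \<subseteq> (qtrans L w ^^ Suc k) (qinit L)"
    using lquot_mono_left_ideal[OF assms, of "concat (replicate k w)" w]
    by (simp add: qinit_def funpow_qtrans_init del: funpow.simps)
qed

lemma state_lang_qstates_nonempty:
  assumes "left_ideal L" "K \<in> qstates L"
  shows "state_lang K \<noteq> {}"
proof -
  obtain v where "K = lquot v L"
    using assms(2) unfolding qstates_def by blast
  moreover have "L \<noteq> {}"
    using assms(1) unfolding left_ideal_def by blast
  ultimately show ?thesis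
    using subset_lquot_left_ideal[OF assms(1), of v] by (auto simp: state_lang_eq)
qed

theorem lemma2:
  fixes L :: "'a list set"
  assumes "finite (UNIV :: 'a set)"
    and "left_ideal L"
    and "finite (qstates L)"
  shows "(\<forall>t \<in> trans_semigroup L. initially_aperiodic (qinit L) t)
       \<and> (\<forall>K \<in> qstates L. state_lang K \<noteq> {})"
  using initially_aperiodic_qtrans[OF assms(2)] state_lang_qstates_nonempty[OF assms(2)]
  unfolding trans_semigroup_def by blast

end
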